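(* Let $k$ be an algebraically closed field, $A$ a graded Frobenius algebra of Gorenstein parameter $-\ell$, and $G\le\mathrm{GrAut}\,A$ a finite subgroup. Then $A*G$ is a graded Frobenius algebra of Gorenstein parameter $-\ell$.
   Context: Graded algebras are $\mathbb{N}$-graded $k$-algebras. For a graded module $M$, $M(n)_i=M_{n+i}$ and $D(M)=\bigoplus_i\mathrm{Hom}_k(M_{-i},k)$. A locally finite graded algebra $B$ is graded Frobenius of Gorenstein parameter $-\ell$ if $D(B)\cong B(\ell)$ as graded right $B$-modules. $A*G=A\otimes_kkG$ with $(a*g)(b*h)=ag(b)*gh$, graded by $A$. *)

theory Defs
  imports "HOL-Computational_Algebra.Polynomial"
begin

definition alg_closed :: "'k::field itself \<Rightarrow> bool" where
  "alg_closed _ \<longleftrightarrow> (\<forall>p :: 'k poly. degree p > 0 \<longrightarrow> (\<exists>x. poly p x = 0))"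

record ('k, 'a) gr_alg =
  gcarr  :: "'a set"
  gadd   :: "'a \<Rightarrow> 'a \<Rightarrow> 'a"
  gzero  :: "'a"
  gmul   :: "'a \<Rightarrow> 'a \<Rightarrow> 'a"
  gone   :: "'a"
  gsmul  :: "'k \<Rightarrow> 'a \<Rightarrow> 'a"
  gpiece :: "nat \<Rightarrow> 'a set"

definition lsum :: "('k, 'a) gr_alg \<Rightarrow> 'a list \<Rightarrow> 'a" where
  "lsum A xs = foldr (gadd A) xs (gzero A)"

definition ssum :: "('k, 'a) gr_alg \<Rightarrow> ('i \<Rightarrow> 'a) \<Rightarrow> 'i set \<Rightarrow> 'a" where
  "ssum A f S = Finite_Set.fold (\<lambda>x acc. gadd A (f x) acc) (gzero A) S"

definition graded_algebra :: "('k::field, 'a) gr_alg \<Rightarrow> bool" where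
  "graded_algebra A \<longleftrightarrow>
    \<comment> \<open>closure\<close>
    gzero A \<in> gcarr A \<and> gone A \<in> gcarr A \<and>
    (\<forall>x\<in>gcarr A. \<forall>y\<in>gcarr A. gadd A x y \<in> gcarr A \<and> gmul A x y \<in> gcarr A) \<and>
    (\<forall>c. \<forall>x\<in>gcarr A. gsmul A c x \<in> gcarr A) \<and>
    \<comment> \<open>k-vector space\<close>
    (\<forall>x\<in>gcarr A. \<forall>y\<in>gcarr A. \<forall>z\<in>gcarr A. gadd A (gadd A x y) z = gadd A x (gadd A y z)) \<and>
    (\<forall>x\<in>gcarr A. \<forall>y\<in>gcarr A. gadd A x y = gadd A y x) \<and>
    (\<forall>x\<in>gcarr A. gadd A (gzero A) x = x) \<and>
    (\<forall>x\<in>gcarr A. \<exists>y\<in>gcarr A. gadd A x y = gzero A) \<and>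
    (\<forall>c. \<forall>x\<in>gcarr A. \<forall>y\<in>gcarr A. gsmul A c (gadd A x y) = gadd A (gsmul A c x) (gsmul A c y)) \<and>
    (\<forall>c d. \<forall>x\<in>gcarr A. gsmul A (c + d) x = gadd A (gsmul A c x) (gsmul A d x)) \<and>
    (\<forall>c d. \<forall>x\<in>gcarr A. gsmul A c (gsmul A d x) = gsmul A (c * d) x) \<and>
    (\<forall>x\<in>gcarr A. gsmul A 1 x = x) \<and>
    \<comment> \<open>associative unital k-algebra\<close>
    (\<forall>x\<in>gcarr A. \<forall>y\<in>gcarr A. \<forall>z\<in>gcarr A. gmul A (gmul A x y) z = gmul A x (gmul A y z)) \<and>
    (\<forall>x\<in>gcarr A. gmul A (gone A) x = x \<and> gmul A x (gone A) = x) \<and>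
    (\<forall>x\<in>gcarr A. \<forall>y\<in>gcarr A. \<forall>z\<in>gcarr A.
        gmul A x (gadd A y z) = gadd A (gmul A x y) (gmul A x z) \<and>
        gmul A (gadd A x y) z = gadd A (gmul A x z) (gmul A y z)) \<and>
    (\<forall>c. \<forall>x\<in>gcarr A. \<forall>y\<in>gcarr A.
        gsmul A c (gmul A x y) = gmul A (gsmul A c x) y \<and>
        gsmul A c (gmul A x y) = gmul A x (gsmul A c y)) \<and>
    \<comment> \<open>grading: subspaces A_n\<close>
    (\<forall>n. gpiece A n \<subseteq> gcarr A \<and> gzero A \<in> gpiece A n \<and>
         (\<forall>x\<in>gpiece A n. \<forall>y\<in>gpiece A n. gadd A x y \<in> gpiece A n) \<and>
         (\<forall>c. \<forall>x\<in>gpiece A n. gsmul A c x \<in> gpiece A n)) \<and>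
    \<comment> \<open>A is the direct sum of the A_n\<close>
    (\<forall>x\<in>gcarr A. \<exists>N c. (\<forall>n<N. c n \<in> gpiece A n) \<and> x = lsum A (map c [0..<N])) \<and>
    (\<forall>N c. (\<forall>n<N. c n \<in> gpiece A n) \<and> lsum A (map c [0..<N]) = gzero A
           \<longrightarrow> (\<forall>n<N. c n = gzero A)) \<and>
    \<comment> \<open>multiplicativity of the grading\<close>
    gone A \<in> gpiece A 0 \<and>
    (\<forall>i j. \<forall>x\<in>gpiece A i. \<forall>y\<in>gpiece A j. gmul A x y \<in> gpiece A (i + j))"

definition fin_dim :: "('k::field, 'a) gr_alg \<Rightarrow> 'a set \<Rightarrow> bool" where
  "fin_dim A V \<longleftrightarrow> (\<exists>vs. set vs \<subseteq> V \<and>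
     (\<forall>x\<in>V. \<exists>cs. length cs = length vs \<and> x = lsum A (map2 (gsmul A) cs vs)))"

definition locally_finite :: "('k::field, 'a) gr_alg \<Rightarrow> bool" where
  "locally_finite A \<longleftrightarrow> (\<forall>n. fin_dim A (gpiece A n))"

(* D(B) = \<Oplus>_i Hom_k(B_{-i}, k): k-linear functionals on B vanishing on all but finitely
   many homogeneous components (extended by 0 outside the carrier) *)
definition gdual :: "('k::field, 'a) gr_alg \<Rightarrow> ('a \<Rightarrow> 'k) set" where
  "gdual B = {f. (\<forall>x\<in>gcarr B. \<forall>y\<in>gcarr B. f (gadd B x y) = f x + f y) \<and>
                 (\<forall>c. \<forall>x\<in>gcarr B. f (gsmul B c x) = c * f x) \<and>
                 (\<forall>x. x \<notin> gcarr B \<longrightarrow> f x = 0) \<and>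
                 (\<exists>N. \<forall>n\<ge>N. \<forall>x\<in>gpiece B n. f x = 0)}"

(* D(B)_i = Hom_k(B_{-i}, k) *)
definition gdual_piece :: "('k::field, 'a) gr_alg \<Rightarrow> int \<Rightarrow> ('a \<Rightarrow> 'k) set" where
  "gdual_piece B i = {f \<in> gdual B. \<forall>n. int n \<noteq> - i \<longrightarrow> (\<forall>x\<in>gpiece B n. f x = 0)}"

definition dual_ract :: "('k::field, 'a) gr_alg \<Rightarrow> ('a \<Rightarrow> 'k) \<Rightarrow> 'a \<Rightarrow> ('a \<Rightarrow> 'k)" where
  "dual_ract B f b = (\<lambda>x. if x \<in> gcarr B then f (gmul B b x) else 0)"

definition shift_piece :: "('k, 'a) gr_alg \<Rightarrow> int \<Rightarrow> int \<Rightarrow> 'a set" where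
  "shift_piece B l i = (if l + i \<ge> 0 then gpiece B (nat (l + i)) else {gzero B})"

(* B is graded Frobenius of Gorenstein parameter -l:  D(B) \<cong> B(l) as graded right B-modules *)
definition graded_frobenius :: "('k::field, 'a) gr_alg \<Rightarrow> int \<Rightarrow> bool" where
  "graded_frobenius B l \<longleftrightarrow> graded_algebra B \<and> locally_finite B \<and>
     (\<exists>\<phi> :: ('a \<Rightarrow> 'k) \<Rightarrow> 'a.
        bij_betw \<phi> (gdual B) (gcarr B) \<and>
        (\<forall>f\<in>gdual B. \<forall>g\<in>gdual B. \<phi> (\<lambda>x. f x + g x) = gadd B (\<phi> f) (\<phi> g)) \<and>
        (\<forall>c. \<forall>f\<in>gdual B. \<phi> (\<lambda>x. c * f x) = gsmul B c (\<phi> f)) \<and>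
        (\<forall>f\<in>gdual B. \<forall>b\<in>gcarr B. \<phi> (dual_ract B f b) = gmul B (\<phi> f) b) \<and>
        (\<forall>i. \<phi> ` gdual_piece B i = shift_piece B l i))"

definition GrAut :: "('k::field, 'a) gr_alg \<Rightarrow> ('a \<Rightarrow> 'a) set" where
  "GrAut A = {g. bij_betw g (gcarr A) (gcarr A) \<and>
     (\<forall>x. x \<notin> gcarr A \<longrightarrow> g x = x) \<and>
     (\<forall>x\<in>gcarr A. \<forall>y\<in>gcarr A. g (gadd A x y) = gadd A (g x) (g y)) \<and>
     (\<forall>c. \<forall>x\<in>gcarr A. g (gsmul A c x) = gsmul A c (g x)) \<and>
     (\<forall>x\<in>gcarr A. \<forall>y\<in>gcarr A. g (gmul A x y) = gmul A (g x) (g y)) \<and>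
     g (gone A) = gone A \<and>
     (\<forall>n. g ` gpiece A n = gpiece A n)}"

definition GrAut_subgroup :: "('k::field, 'a) gr_alg \<Rightarrow> ('a \<Rightarrow> 'a) set \<Rightarrow> bool" where
  "GrAut_subgroup A G \<longleftrightarrow> G \<subseteq> GrAut A \<and> id \<in> G \<and>
     (\<forall>g\<in>G. \<forall>h\<in>G. g \<circ> h \<in> G) \<and> (\<forall>g\<in>G. \<exists>h\<in>G. h \<circ> g = id)"

(* A*G = A \<otimes>_k kG: elements \<Sum>_g a_g * g are functions G \<rightarrow> A (zero outside G);
   (a*g)(b*h) = a g(b) * gh;  graded by A *)
definition skew_group_alg :: "('k::field, 'a) gr_alg \<Rightarrow> ('a \<Rightarrow> 'a) set \<Rightarrow> ('k, ('a \<Rightarrow> 'a) \<Rightarrow> 'a) gr_alg" where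
  "skew_group_alg A G =
    \<lparr> gcarr = {F. (\<forall>g\<in>G. F g \<in> gcarr A) \<and> (\<forall>g. g \<notin> G \<longrightarrow> F g = gzero A)},
      gadd = (\<lambda>F H. \<lambda>g. if g \<in> G then gadd A (F g) (H g) else gzero A),
      gzero = (\<lambda>g. gzero A),
      gmul = (\<lambda>F H. \<lambda>s. if s \<in> G then
                 ssum A (\<lambda>(g, h). gmul A (F g) (g (H h))) {(g, h). g \<in> G \<and> h \<in> G \<and> g \<circ> h = s}
               else gzero A),
      gone = (\<lambda>g. if g = id then gone A else gzero A),
      gsmul = (\<lambda>c F. \<lambda>g. if g \<in> G then gsmul A c (F g) else gzero A),
      gpiece = (\<lambda>n. {F. (\<forall>g\<in>G. F g \<in> gpiece A n) \<and> (\<forall>g. g \<notin> G \<longrightarrow> F g = gzero A)}) \<rparr>"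

end

theory Submission
  imports Defs
begin

text \<open>A graded Frobenius structure \<open>\<phi> : D(A) \<cong> A(l)\<close> is the same as a form \<open>\<lambda> = \<phi>\<^sup>-\<^sup>1(1)\<close> on \<open>A\<close>,
  concentrated in degree \<open>l\<close>, whose pairing \<open>(b, x) \<mapsto> \<lambda>(b x)\<close> identifies \<open>A\<close> with \<open>D(A)\<close>.
  On \<open>B = A * G\<close> take the form \<open>\<Lambda>(X) = \<lambda>(X\<^sub>1)\<close>, i.e. \<open>\<lambda>\<close> applied to the coefficient of the identity, and
  the map \<open>\<psi>(F) = (X \<mapsto> \<Lambda>(F X))\<close>. It is additive and, by associativity, right \<open>B\<close>-linear; it maps
  \<open>B(l)\<^sub>i\<close> into \<open>D(B)\<^sub>i\<close> because \<open>\<Lambda>\<close>, like \<open>\<lambda>\<close>, only sees degree \<open>l\<close>. Evaluating \<open>\<psi>(F)\<close> at the elements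
  \<open>v * h\<close> recovers the functionals \<open>y \<mapsto> \<lambda>(F\<^sub>u y)\<close> on each coefficient \<open>F\<^sub>u\<close>, so nondegeneracy of \<open>\<lambda>\<close>
  makes \<open>\<psi>\<close> bijective and degree-preserving, and its inverse is the required \<open>D(B) \<cong> B(l)\<close>.
  Finiteness of \<open>G\<close> makes \<open>A * G\<close> locally finite.\<close>

section \<open>Finite sums in an additive group\<close>

definition additive_group :: "('k, 'a) gr_alg \<Rightarrow> bool" where
  "additive_group A \<longleftrightarrow> gzero A \<in> gcarr A \<and>
    (\<forall>x\<in>gcarr A. \<forall>y\<in>gcarr A. gadd A x y \<in> gcarr A) \<and>
    (\<forall>x\<in>gcarr A. \<forall>y\<in>gcarr A. \<forall>z\<in>gcarr A. gadd A (gadd A x y) z = gadd A x (gadd A y z)) \<and>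
    (\<forall>x\<in>gcarr A. \<forall>y\<in>gcarr A. gadd A x y = gadd A y x) \<and>
    (\<forall>x\<in>gcarr A. gadd A (gzero A) x = x) \<and>
    (\<forall>x\<in>gcarr A. \<exists>y\<in>gcarr A. gadd A x y = gzero A)"

lemma additive_groupD:
  assumes "additive_group A"
  shows "gzero A \<in> gcarr A"
    "\<And>x y. x \<in> gcarr A \<Longrightarrow> y \<in> gcarr A \<Longrightarrow> gadd A x y \<in> gcarr A"
    "\<And>x y z. x \<in> gcarr A \<Longrightarrow> y \<in> gcarr A \<Longrightarrow> z \<in> gcarr A \<Longrightarrow>
       gadd A (gadd A x y) z = gadd A x (gadd A y z)"
    "\<And>x y. x \<in> gcarr A \<Longrightarrow> y \<in> gcarr A \<Longrightarrow> gadd A x y = gadd A y x"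
    "\<And>x. x \<in> gcarr A \<Longrightarrow> gadd A (gzero A) x = x"
    "\<And>x. x \<in> gcarr A \<Longrightarrow> gadd A x (gzero A) = x"
  using assms unfolding additive_group_def by auto

lemma additive_group_idem_zero:
  assumes A: "additive_group A" and y: "y \<in> gcarr A" and idem: "gadd A y y = y"
  shows "y = gzero A"
proof -
  obtain z where z: "z \<in> gcarr A" "gadd A y z = gzero A"
    using A y unfolding additive_group_def by blast
  have "gadd A (gadd A y y) z = gadd A y (gadd A y z)"
    using additive_groupD(3)[OF A y y z(1)] .
  then show ?thesis using idem z additive_groupD[OF A] y by simp
qed

lemma additive_map_zero:
  assumes A: "additive_group A"
    and f: "\<And>x y. x \<in> gcarr A \<Longrightarrow> y \<in> gcarr A \<Longrightarrow> f (gadd A x y) = f x + (f y :: 'b::cancel_comm_monoid_add)"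
  shows "f (gzero A) = 0"
proof -
  have "f (gzero A) = f (gzero A) + f (gzero A)"
    using f[of "gzero A" "gzero A"] additive_groupD[OF A] by simp
  then show ?thesis by (metis add_cancel_right_right)
qed

lemma lsum_Nil [simp]: "lsum A [] = gzero A"
  and lsum_Cons [simp]: "lsum A (x # xs) = gadd A x (lsum A xs)"
  by (simp_all add: lsum_def)

lemma lsum_closed:
  "additive_group A \<Longrightarrow> set xs \<subseteq> gcarr A \<Longrightarrow> lsum A xs \<in> gcarr A"
  by (induction xs) (simp_all add: additive_groupD(1,2))

lemma lsum_zeros:
  assumes A: "additive_group A" and "\<And>x. x \<in> set xs \<Longrightarrow> x = gzero A"
  shows "lsum A xs = gzero A"
  using assms(2)
proof (induction xs)
  case (Cons x xs)
  then have "x = gzero A" "lsum A xs = gzero A" by simp_all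
  then show ?case by (simp add: additive_groupD(1,5)[OF A])
qed simp

lemma lsum_append:
  assumes A: "additive_group A" and "set xs \<subseteq> gcarr A" "set ys \<subseteq> gcarr A"
  shows "lsum A (xs @ ys) = gadd A (lsum A xs) (lsum A ys)"
  using assms(2)
proof (induction xs)
  case Nil then show ?case using lsum_closed[OF A assms(3)] by (simp add: additive_groupD(5)[OF A])
next
  case (Cons x xs)
  then show ?case
    using lsum_closed[OF A] assms(3) additive_groupD(3)[OF A] by simp
qed

lemma lsum_pad_zeros:
  assumes A: "additive_group A" and "M \<le> N" and "\<And>n. n < M \<Longrightarrow> d n = c n"
    and "\<And>n. M \<le> n \<Longrightarrow> n < N \<Longrightarrow> d n = gzero A"
  shows "lsum A (map d [0..<N]) = lsum A (map c [0..<M])"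
proof -
  have "[0..<N] = [0..<M] @ [M..<N]" using assms(2) upt_add_eq_append[of 0 M "N - M"] by simp
  then have "lsum A (map d [0..<N]) = foldr (gadd A) (map d [0..<M]) (lsum A (map d [M..<N]))"
    by (simp add: lsum_def)
  also have "lsum A (map d [M..<N]) = gzero A" by (rule lsum_zeros[OF A]) (use assms in auto)
  also have "map d [0..<M] = map c [0..<M]" using assms(3) by simp
  finally show ?thesis by (simp add: lsum_def)
qed

lemma additive_map_lsum:
  assumes A: "additive_group A"
    and f: "\<And>x y. x \<in> gcarr A \<Longrightarrow> y \<in> gcarr A \<Longrightarrow> f (gadd A x y) = f x + (f y :: 'b::comm_monoid_add)"
    and "f (gzero A) = 0"
  shows "set xs \<subseteq> gcarr A \<Longrightarrow> f (lsum A xs) = sum_list (map f xs)"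
  by (induction xs) (auto simp: assms lsum_closed[OF A])

lemma ssum_infinite: "\<not> finite S \<Longrightarrow> ssum A f S = gzero A"
  by (simp add: ssum_def)

lemma ssum_empty [simp]: "ssum A f {} = gzero A"
  by (simp add: ssum_def)

text \<open>Addition is only commutative on the carrier, so the folding function is first guarded by a
  carrier test, which makes it commute everywhere.\<close>

lemma ssum_insert_guarded:
  assumes A: "additive_group A" and fin: "finite S" and x: "x \<notin> S"
    and f: "\<And>y. y \<in> insert x S \<Longrightarrow> f y \<in> gcarr A"
  shows "ssum A f (insert x S) =
    (if ssum A f S \<in> gcarr A then gadd A (f x) (ssum A f S) else ssum A f S)"
proof -
  define g where "g = (\<lambda>x acc. if acc \<in> gcarr A then gadd A (f x) acc else acc)"
  have guarded: "ssum A f T = Finite_Set.fold g (gzero A) T" if "T \<subseteq> insert x S" for T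
    unfolding ssum_def g_def
    by (rule fold_closed_eq[where B="gcarr A"]) (use A f that in \<open>auto simp: additive_groupD(1,2)\<close>)
  have "comp_fun_commute_on (insert x S) g"
  proof
    fix u v assume "u \<in> insert x S" "v \<in> insert x S"
    then have fu: "f u \<in> gcarr A" and fv: "f v \<in> gcarr A" using f by auto
    have "g v (g u acc) = g u (g v acc)" for acc
    proof (cases "acc \<in> gcarr A")
      case True
      then have "gadd A (f v) (gadd A (f u) acc) = gadd A (f u) (gadd A (f v) acc)"
        using additive_groupD(3,4)[OF A] fu fv by metis
      then show ?thesis using True fu fv additive_groupD(2)[OF A] by (simp add: g_def)
    qed (simp add: g_def)
    then show "g v \<circ> g u = g u \<circ> g v" by auto
  qed
  then have "Finite_Set.fold g (gzero A) (insert x S) = g x (Finite_Set.fold g (gzero A) S)"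
    by (rule comp_fun_commute_on.fold_insert) (use fin x in auto)
  moreover have "ssum A f S = Finite_Set.fold g (gzero A) S"
    and "ssum A f (insert x S) = Finite_Set.fold g (gzero A) (insert x S)"
    by (rule guarded, blast)+
  ultimately show ?thesis by (simp add: g_def)
qed

lemma ssum_closed:
  assumes A: "additive_group A" and f: "\<And>y. y \<in> S \<Longrightarrow> f y \<in> gcarr A"
  shows "ssum A f S \<in> gcarr A"
proof (cases "finite S")
  case True
  then show ?thesis using f
  proof (induction S rule: finite_induct)
    case (insert x F)
    then show ?case using ssum_insert_guarded[OF A insert(1,2)] additive_groupD[OF A] by simp
  qed (simp add: additive_groupD[OF A])
qed (simp add: ssum_infinite additive_groupD[OF A])

lemma ssum_insert:
  assumes A: "additive_group A" and "finite S" "x \<notin> S"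
    and f: "\<And>y. y \<in> insert x S \<Longrightarrow> f y \<in> gcarr A"
  shows "ssum A f (insert x S) = gadd A (f x) (ssum A f S)"
  using ssum_insert_guarded[OF assms] ssum_closed[OF A, of S f] f by auto

lemma ssum_cong:
  assumes "\<And>y. y \<in> S \<Longrightarrow> f y = g y"
  shows "ssum A f S = ssum A g S"
  unfolding ssum_def by (rule fold_closed_eq[where B=UNIV]) (use assms in auto)

lemma ssum_hom:
  assumes A: "additive_group A" and B: "additive_group B" and f: "\<And>y. y \<in> S \<Longrightarrow> f y \<in> gcarr A"
    and h_closed: "\<And>x. x \<in> gcarr A \<Longrightarrow> h x \<in> gcarr B"
    and h_add: "\<And>x y. x \<in> gcarr A \<Longrightarrow> y \<in> gcarr A \<Longrightarrow> h (gadd A x y) = gadd B (h x) (h y)"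
    and h_zero: "h (gzero A) = gzero B"
  shows "h (ssum A f S) = ssum B (\<lambda>y. h (f y)) S"
proof (cases "finite S")
  case True
  then show ?thesis using f
  proof (induction S rule: finite_induct)
    case (insert x F)
    have "h (ssum A f (insert x F)) = gadd B (h (f x)) (h (ssum A f F))"
      using ssum_insert[OF A insert(1,2)] insert(4) h_add ssum_closed[OF A, of F f] by simp
    also have "\<dots> = ssum B (\<lambda>y. h (f y)) (insert x F)"
      using ssum_insert[OF B insert(1,2), of "\<lambda>y. h (f y)"] insert h_closed by simp
    finally show ?case .
  qed (simp add: h_zero)
qed (simp add: h_zero ssum_infinite)

lemma additive_map_ssum:
  assumes A: "additive_group A" and f: "\<And>y. y \<in> S \<Longrightarrow> f y \<in> gcarr A"
    and h_add: "\<And>x y. x \<in> gcarr A \<Longrightarrow> y \<in> gcarr A \<Longrightarrow> h (gadd A x y) = h x + (h y :: 'b::comm_monoid_add)"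
    and h_zero: "h (gzero A) = 0"
  shows "h (ssum A f S) = (\<Sum>y\<in>S. h (f y))"
proof (cases "finite S")
  case True
  then show ?thesis using f
  proof (induction S rule: finite_induct)
    case (insert x F)
    then show ?case
      using ssum_insert[OF A insert(1,2)] h_add ssum_closed[OF A, of F f] by simp
  qed (simp add: h_zero)
qed (simp add: h_zero ssum_infinite)

lemma ssum_gadd:
  assumes A: "additive_group A" and f: "\<And>y. y \<in> S \<Longrightarrow> f y \<in> gcarr A"
    and g: "\<And>y. y \<in> S \<Longrightarrow> g y \<in> gcarr A"
  shows "ssum A (\<lambda>y. gadd A (f y) (g y)) S = gadd A (ssum A f S) (ssum A g S)"
proof (cases "finite S")
  case True
  then show ?thesis using f g
  proof (induction S rule: finite_induct)
    case (insert x F)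
    have c: "ssum A f F \<in> gcarr A" "ssum A g F \<in> gcarr A"
      by (rule ssum_closed[OF A], use insert in auto)+
    have "ssum A (\<lambda>y. gadd A (f y) (g y)) (insert x F)
        = gadd A (gadd A (f x) (g x)) (gadd A (ssum A f F) (ssum A g F))"
      using ssum_insert[OF A insert(1,2), of "\<lambda>y. gadd A (f y) (g y)"] insert additive_groupD[OF A]
      by simp
    also have "\<dots> = gadd A (gadd A (f x) (ssum A f F)) (gadd A (g x) (ssum A g F))"
      using c insert(4,5) additive_groupD[OF A] by (smt (verit) insertCI)
    also have "\<dots> = gadd A (ssum A f (insert x F)) (ssum A g (insert x F))"
      using ssum_insert[OF A insert(1,2)] insert by simp
    finally show ?case .
  qed (simp add: additive_groupD[OF A])
qed (simp add: ssum_infinite additive_groupD[OF A])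

lemma ssum_zero:
  assumes A: "additive_group A" and f: "\<And>y. y \<in> S \<Longrightarrow> f y = gzero A"
  shows "ssum A f S = gzero A"
proof -
  have "ssum A f S = ssum A (\<lambda>y. gzero A) S" by (rule ssum_cong) (use f in auto)
  also have "\<dots> = gzero A"
  proof (cases "finite S")
    case True then show ?thesis
      by (induction S rule: finite_induct)
        (simp_all add: ssum_insert[OF A] additive_groupD[OF A])
  qed (simp add: ssum_infinite)
  finally show ?thesis .
qed

lemma ssum_single:
  assumes A: "additive_group A" and "finite S" "a \<in> S" and fa: "f a \<in> gcarr A"
    and f: "\<And>y. y \<in> S \<Longrightarrow> y \<noteq> a \<Longrightarrow> f y = gzero A"
  shows "ssum A f S = f a"
proof -
  have S: "S = insert a (S - {a})" using assms(3) by auto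
  have "ssum A f (insert a (S - {a})) = gadd A (f a) (ssum A f (S - {a}))"
    by (rule ssum_insert[OF A]) (use assms additive_groupD(1)[OF A] in \<open>auto, metis\<close>)
  also have "ssum A f (S - {a}) = gzero A" by (rule ssum_zero[OF A]) (use f in auto)
  finally show ?thesis using S additive_groupD[OF A] fa by simp
qed

lemma ssum_reindex:
  assumes A: "additive_group A" and inj: "inj_on h S" and f: "\<And>y. y \<in> h ` S \<Longrightarrow> f y \<in> gcarr A"
  shows "ssum A f (h ` S) = ssum A (\<lambda>x. f (h x)) S"
proof (cases "finite S")
  case True
  then show ?thesis using inj f
  proof (induction S rule: finite_induct)
    case (insert x F)
    have "h x \<notin> h ` F" using insert by auto
    then have "ssum A f (h ` insert x F) = gadd A (f (h x)) (ssum A f (h ` F))"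
      using ssum_insert[OF A, of "h ` F" "h x" f] insert by auto
    also have "ssum A f (h ` F) = ssum A (\<lambda>x. f (h x)) F" using insert by auto
    also have "gadd A (f (h x)) (ssum A (\<lambda>x. f (h x)) F) = ssum A (\<lambda>x. f (h x)) (insert x F)"
      by (rule ssum_insert[OF A, symmetric]) (use insert in auto)
    finally show ?case .
  qed simp
next
  case False
  then have "\<not> finite (h ` S)" using inj finite_imageD by blast
  then show ?thesis using False by (simp add: ssum_infinite)
qed

lemma ssum_swap:
  assumes A: "additive_group A" and fS: "finite S" and "finite T"
    and f: "\<And>x y. x \<in> S \<Longrightarrow> y \<in> T \<Longrightarrow> f x y \<in> gcarr A"
  shows "ssum A (\<lambda>x. ssum A (\<lambda>y. f x y) T) S = ssum A (\<lambda>y. ssum A (\<lambda>x. f x y) S) T"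
  using fS f
proof (induction S rule: finite_induct)
  case empty
  then show ?case by (simp add: ssum_zero[OF A])
next
  case (insert a F)
  have "ssum A (\<lambda>x. ssum A (f x) T) (insert a F)
      = gadd A (ssum A (f a) T) (ssum A (\<lambda>y. ssum A (\<lambda>x. f x y) F) T)"
    using ssum_insert[OF A insert(1,2)] ssum_closed[OF A] insert by (metis insertCI)
  also have "\<dots> = ssum A (\<lambda>y. gadd A (f a y) (ssum A (\<lambda>x. f x y) F)) T"
    by (rule ssum_gadd[OF A, symmetric]) (use insert in \<open>auto intro!: ssum_closed[OF A]\<close>)
  also have "\<dots> = ssum A (\<lambda>y. ssum A (\<lambda>x. f x y) (insert a F)) T"
    by (rule ssum_cong) (use ssum_insert[OF A insert(1,2)] insert(4) in auto)
  finally show ?case .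
qed

lemma ssum_closed_subset:
  assumes A: "additive_group A" and P: "P \<subseteq> gcarr A" "gzero A \<in> P"
    "\<And>x y. x \<in> P \<Longrightarrow> y \<in> P \<Longrightarrow> gadd A x y \<in> P"
    and f: "\<And>y. y \<in> S \<Longrightarrow> f y \<in> P"
  shows "ssum A f S \<in> P"
proof (cases "finite S")
  case True
  then show ?thesis using f
  proof (induction S rule: finite_induct)
    case (insert x F)
    have "ssum A f (insert x F) = gadd A (f x) (ssum A f F)"
      by (rule ssum_insert[OF A insert(1,2)]) (use insert P in auto)
    then show ?case using insert P by auto
  qed (simp add: P)
qed (simp add: ssum_infinite P)

section \<open>The skew group algebra\<close>

locale skew_setting =
  fixes A :: "('k::field, 'a) gr_alg" and G :: "('a \<Rightarrow> 'a) set"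
  assumes graded: "graded_algebra A" and finite_G: "finite G" and subgroup: "GrAut_subgroup A G"
begin

lemma additive_group: "additive_group A"
  using graded unfolding graded_algebra_def additive_group_def by (elim conjE) (intro conjI; blast)

lemma
  shows zero_closed [simp]: "gzero A \<in> gcarr A"
    and one_closed [simp]: "gone A \<in> gcarr A"
    and gadd_closed [simp]: "x \<in> gcarr A \<Longrightarrow> y \<in> gcarr A \<Longrightarrow> gadd A x y \<in> gcarr A"
    and gmul_closed [simp]: "x \<in> gcarr A \<Longrightarrow> y \<in> gcarr A \<Longrightarrow> gmul A x y \<in> gcarr A"
    and gsmul_closed [simp]: "x \<in> gcarr A \<Longrightarrow> gsmul A c x \<in> gcarr A"
    and gadd_assoc: "x \<in> gcarr A \<Longrightarrow> y \<in> gcarr A \<Longrightarrow> z \<in> gcarr A \<Longrightarrow>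
      gadd A (gadd A x y) z = gadd A x (gadd A y z)"
    and gadd_comm: "x \<in> gcarr A \<Longrightarrow> y \<in> gcarr A \<Longrightarrow> gadd A x y = gadd A y x"
    and gadd_zero_left [simp]: "x \<in> gcarr A \<Longrightarrow> gadd A (gzero A) x = x"
    and gsmul_gadd: "x \<in> gcarr A \<Longrightarrow> y \<in> gcarr A \<Longrightarrow>
      gsmul A c (gadd A x y) = gadd A (gsmul A c x) (gsmul A c y)"
    and gsmul_add: "x \<in> gcarr A \<Longrightarrow> gsmul A (c + d) x = gadd A (gsmul A c x) (gsmul A d x)"
    and gsmul_gsmul: "x \<in> gcarr A \<Longrightarrow> gsmul A c (gsmul A d x) = gsmul A (c * d) x"
    and gsmul_one [simp]: "x \<in> gcarr A \<Longrightarrow> gsmul A 1 x = x"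
    and gmul_assoc: "x \<in> gcarr A \<Longrightarrow> y \<in> gcarr A \<Longrightarrow> z \<in> gcarr A \<Longrightarrow>
      gmul A (gmul A x y) z = gmul A x (gmul A y z)"
    and gmul_one_left [simp]: "x \<in> gcarr A \<Longrightarrow> gmul A (gone A) x = x"
    and gmul_one_right [simp]: "x \<in> gcarr A \<Longrightarrow> gmul A x (gone A) = x"
    and gmul_gadd_left: "x \<in> gcarr A \<Longrightarrow> y \<in> gcarr A \<Longrightarrow> z \<in> gcarr A \<Longrightarrow>
      gmul A x (gadd A y z) = gadd A (gmul A x y) (gmul A x z)"
    and gmul_gadd_right: "x \<in> gcarr A \<Longrightarrow> y \<in> gcarr A \<Longrightarrow> z \<in> gcarr A \<Longrightarrow>
      gmul A (gadd A x y) z = gadd A (gmul A x z) (gmul A y z)"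
    and gsmul_gmul_left: "x \<in> gcarr A \<Longrightarrow> y \<in> gcarr A \<Longrightarrow>
      gsmul A c (gmul A x y) = gmul A (gsmul A c x) y"
    and gsmul_gmul_right: "x \<in> gcarr A \<Longrightarrow> y \<in> gcarr A \<Longrightarrow>
      gsmul A c (gmul A x y) = gmul A x (gsmul A c y)"
    and gpiece_subset: "gpiece A n \<subseteq> gcarr A"
    and gpiece_zero [simp]: "gzero A \<in> gpiece A n"
    and gpiece_gadd: "x \<in> gpiece A n \<Longrightarrow> y \<in> gpiece A n \<Longrightarrow> gadd A x y \<in> gpiece A n"
    and gpiece_gsmul: "x \<in> gpiece A n \<Longrightarrow> gsmul A c x \<in> gpiece A n"
    and gpiece_decomp: "x \<in> gcarr A \<Longrightarrow>
      \<exists>N cs. (\<forall>n<N. cs n \<in> gpiece A n) \<and> x = lsum A (map cs [0..<N])"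
    and gpiece_decomp_unique: "\<forall>n<N. cs n \<in> gpiece A n \<Longrightarrow> lsum A (map cs [0..<N]) = gzero A \<Longrightarrow>
      n < N \<Longrightarrow> cs n = gzero A"
    and gone_gpiece: "gone A \<in> gpiece A 0"
    and gpiece_gmul: "x \<in> gpiece A i \<Longrightarrow> y \<in> gpiece A j \<Longrightarrow> gmul A x y \<in> gpiece A (i + j)"
  by (insert graded[unfolded graded_algebra_def], (elim conjE, (blast | metis (no_types)))+)

lemma gadd_zero_right [simp]: "x \<in> gcarr A \<Longrightarrow> gadd A x (gzero A) = x"
  by (metis gadd_comm gadd_zero_left zero_closed)

lemma gmul_zero_left [simp]: "x \<in> gcarr A \<Longrightarrow> gmul A (gzero A) x = gzero A"
  by (rule additive_group_idem_zero[OF additive_group]) (simp, metis gmul_gadd_right gadd_zero_left zero_closed)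

lemma gmul_zero_right [simp]: "x \<in> gcarr A \<Longrightarrow> gmul A x (gzero A) = gzero A"
  by (rule additive_group_idem_zero[OF additive_group]) (simp, metis gmul_gadd_left gadd_zero_left zero_closed)

lemma gsmul_zero [simp]: "gsmul A c (gzero A) = gzero A"
  by (rule additive_group_idem_zero[OF additive_group]) (simp, metis gsmul_gadd gadd_zero_left zero_closed)

lemma gpiece_carrier: "x \<in> gpiece A n \<Longrightarrow> x \<in> gcarr A"
  using gpiece_subset by blast

lemma G_GrAut: "g \<in> G \<Longrightarrow> g \<in> GrAut A"
  and id_in_G [simp]: "id \<in> G"
  and comp_in_G [simp]: "g \<in> G \<Longrightarrow> h \<in> G \<Longrightarrow> g \<circ> h \<in> G"
  using subgroup unfolding GrAut_subgroup_def by auto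

lemma
  assumes "g \<in> G"
  shows G_bij_carrier: "bij_betw g (gcarr A) (gcarr A)"
    and G_outside: "x \<notin> gcarr A \<Longrightarrow> g x = x"
    and aut_gadd: "x \<in> gcarr A \<Longrightarrow> y \<in> gcarr A \<Longrightarrow> g (gadd A x y) = gadd A (g x) (g y)"
    and aut_gsmul: "x \<in> gcarr A \<Longrightarrow> g (gsmul A c x) = gsmul A c (g x)"
    and aut_gmul: "x \<in> gcarr A \<Longrightarrow> y \<in> gcarr A \<Longrightarrow> g (gmul A x y) = gmul A (g x) (g y)"
    and aut_gone: "g (gone A) = gone A"
    and aut_gpiece_eq: "g ` gpiece A n = gpiece A n"
  using G_GrAut[OF assms] unfolding GrAut_def by auto

lemma aut_closed [simp]: "g \<in> G \<Longrightarrow> x \<in> gcarr A \<Longrightarrow> g x \<in> gcarr A"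
  using G_bij_carrier bij_betwE by blast

lemma aut_zero [simp]: "g \<in> G \<Longrightarrow> g (gzero A) = gzero A"
  by (rule additive_group_idem_zero[OF additive_group]) (simp, metis aut_gadd gadd_zero_left zero_closed)

lemma aut_gpiece: "g \<in> G \<Longrightarrow> x \<in> gpiece A n \<Longrightarrow> g x \<in> gpiece A n"
  using aut_gpiece_eq by blast

text \<open>Automorphisms are extended by the identity outside the carrier, so they are genuine
  bijections and the group inverse of \<open>g \<in> G\<close> is the function inverse \<open>inv g\<close>.\<close>

lemma bij_G:
  assumes g: "g \<in> G" shows "bij g"
proof -
  have "bij_betw g (- gcarr A) (- gcarr A)"
    using bij_betw_cong[of "- gcarr A" g id] G_outside[OF g] by simp
  then have "bij_betw g (gcarr A \<union> - gcarr A) (gcarr A \<union> - gcarr A)"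
    using bij_betw_combine[OF G_bij_carrier[OF g]] by blast
  then show ?thesis by simp
qed

lemma G_comp_inv [simp]: "g \<in> G \<Longrightarrow> g \<circ> inv g = id"
  using bij_G surj_iff bij_is_surj by blast

lemma G_inv_comp [simp]: "g \<in> G \<Longrightarrow> inv g \<circ> g = id"
  using bij_G inj_iff bij_is_inj by blast

lemma inv_in_G [simp]:
  assumes g: "g \<in> G" shows "inv g \<in> G"
proof -
  obtain h where h: "h \<in> G" "h \<circ> g = id" using subgroup g unfolding GrAut_subgroup_def by blast
  have "h = (h \<circ> g) \<circ> inv g" using g by (simp add: comp_assoc)
  then show ?thesis using h by simp
qed

lemma G_apply_inv [simp]: "g \<in> G \<Longrightarrow> g (inv g x) = x"
  and G_inv_apply [simp]: "g \<in> G \<Longrightarrow> inv g (g x) = x"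
  by (metis G_comp_inv comp_apply id_apply, metis G_inv_comp comp_apply id_apply)

lemma G_inv_of_comp: "g \<in> G \<Longrightarrow> h \<in> G \<Longrightarrow> inv (g \<circ> h) = inv h \<circ> inv g"
  using bij_G o_inv_distrib by blast

lemma G_inv_inv [simp]: "g \<in> G \<Longrightarrow> inv (inv g) = g"
  using bij_G inv_inv_eq by blast

lemma G_comp_inv_cancel: "g \<in> G \<Longrightarrow> (a \<circ> g) \<circ> (inv g \<circ> b) = a \<circ> b"
  by (metis comp_assoc comp_id G_comp_inv)

lemma gmul_ssum_left:
  "(\<And>x. x \<in> S \<Longrightarrow> f x \<in> gcarr A) \<Longrightarrow> y \<in> gcarr A \<Longrightarrow>
    gmul A (ssum A f S) y = ssum A (\<lambda>x. gmul A (f x) y) S"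
  by (rule ssum_hom[OF additive_group additive_group, where h="\<lambda>x. gmul A x y"])
    (auto simp: gmul_gadd_right)

lemma gmul_ssum_right:
  "(\<And>x. x \<in> S \<Longrightarrow> f x \<in> gcarr A) \<Longrightarrow> y \<in> gcarr A \<Longrightarrow>
    gmul A y (ssum A f S) = ssum A (\<lambda>x. gmul A y (f x)) S"
  by (rule ssum_hom[OF additive_group additive_group, where h="\<lambda>x. gmul A y x"])
    (auto simp: gmul_gadd_left)

lemma aut_ssum:
  "(\<And>x. x \<in> S \<Longrightarrow> f x \<in> gcarr A) \<Longrightarrow> g \<in> G \<Longrightarrow> g (ssum A f S) = ssum A (\<lambda>x. g (f x)) S"
  by (rule ssum_hom[OF additive_group additive_group, where h=g]) (auto simp: aut_gadd)

lemma gsmul_ssum: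
  "(\<And>x. x \<in> S \<Longrightarrow> f x \<in> gcarr A) \<Longrightarrow> gsmul A c (ssum A f S) = ssum A (\<lambda>x. gsmul A c (f x)) S"
  by (rule ssum_hom[OF additive_group additive_group, where h="gsmul A c"])
    (auto simp: gsmul_gadd)

lemma ssum_translate:
  assumes g: "g \<in> G" and f: "\<And>x. x \<in> G \<Longrightarrow> f x \<in> gcarr A"
  shows "ssum A f G = ssum A (\<lambda>u. f (g \<circ> u)) G"
proof -
  have "G \<subseteq> (\<lambda>u. g \<circ> u) ` G"
  proof
    fix u assume "u \<in> G"
    then have "u = g \<circ> (inv g \<circ> u)" "inv g \<circ> u \<in> G" using g by (simp_all flip: comp_assoc)
    then show "u \<in> (\<lambda>u. g \<circ> u) ` G" by (rule image_eqI)
  qed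
  then have image: "(\<lambda>u. g \<circ> u) ` G = G" using g by auto
  have "inj_on (\<lambda>u. g \<circ> u) G"
    by (rule inj_onI) (metis g G_inv_comp comp_assoc id_comp)
  then have "ssum A f ((\<lambda>u. g \<circ> u) ` G) = ssum A (\<lambda>u. f (g \<circ> u)) G"
    by (rule ssum_reindex[OF additive_group]) (use f image in auto)
  then show ?thesis using image by simp
qed

abbreviation B :: "('k, ('a \<Rightarrow> 'a) \<Rightarrow> 'a) gr_alg" where "B \<equiv> skew_group_alg A G"

lemma skew_carrier_iff:
  "F \<in> gcarr B \<longleftrightarrow> (\<forall>g\<in>G. F g \<in> gcarr A) \<and> (\<forall>g. g \<notin> G \<longrightarrow> F g = gzero A)"
  by (simp add: skew_group_alg_def)

lemma skew_piece_iff: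
  "F \<in> gpiece B n \<longleftrightarrow> (\<forall>g\<in>G. F g \<in> gpiece A n) \<and> (\<forall>g. g \<notin> G \<longrightarrow> F g = gzero A)"
  by (simp add: skew_group_alg_def)

lemma skew_apply [simp]:
  "g \<in> G \<Longrightarrow> gadd B F H g = gadd A (F g) (H g)"
  "g \<in> G \<Longrightarrow> gsmul B c F g = gsmul A c (F g)"
  "gzero B g = gzero A"
  "gone B g = (if g = id then gone A else gzero A)"
  by (simp_all add: skew_group_alg_def)

lemma skew_mul_eq:
  "gmul B F H = (\<lambda>s. if s \<in> G then
     ssum A (\<lambda>(g, h). gmul A (F g) (g (H h))) {(g, h). g \<in> G \<and> h \<in> G \<and> g \<circ> h = s}
   else gzero A)"
  by (simp add: skew_group_alg_def)

lemma skew_apply_outside [simp]: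
  "g \<notin> G \<Longrightarrow> gadd B F H g = gzero A"
  "g \<notin> G \<Longrightarrow> gsmul B c F g = gzero A"
  "g \<notin> G \<Longrightarrow> gmul B F H g = gzero A"
  by (simp_all add: skew_group_alg_def)

lemma skew_carrier_apply [simp]: "F \<in> gcarr B \<Longrightarrow> g \<in> G \<Longrightarrow> F g \<in> gcarr A"
  and skew_carrier_outside: "F \<in> gcarr B \<Longrightarrow> g \<notin> G \<Longrightarrow> F g = gzero A"
  by (simp_all add: skew_carrier_iff)

lemma skew_carrierI:
  "(\<And>g. g \<in> G \<Longrightarrow> F g \<in> gcarr A) \<Longrightarrow> (\<And>g. g \<notin> G \<Longrightarrow> F g = gzero A) \<Longrightarrow> F \<in> gcarr B"
  by (simp add: skew_carrier_iff)

lemma skew_eqI: "F \<in> gcarr B \<Longrightarrow> H \<in> gcarr B \<Longrightarrow> (\<And>g. g \<in> G \<Longrightarrow> F g = H g) \<Longrightarrow> F = H"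
  by (rule ext) (metis skew_carrier_outside)

lemma skew_zero_closed [simp]: "gzero B \<in> gcarr B"
  and skew_one_closed [simp]: "gone B \<in> gcarr B"
  and skew_add_closed [simp]: "F \<in> gcarr B \<Longrightarrow> H \<in> gcarr B \<Longrightarrow> gadd B F H \<in> gcarr B"
  and skew_smul_closed [simp]: "F \<in> gcarr B \<Longrightarrow> gsmul B c F \<in> gcarr B"
  by (auto simp: skew_carrier_iff)

lemma additive_group_skew: "additive_group B"
  unfolding additive_group_def
proof (intro conjI ballI)
  fix F assume F: "F \<in> gcarr B"
  show "gadd B (gzero B) F = F" using F by (auto intro!: skew_eqI)
  have "\<forall>g\<in>G. \<exists>y\<in>gcarr A. gadd A (F g) y = gzero A"
    using F additive_group skew_carrier_apply unfolding additive_group_def by blast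
  then obtain H where H: "\<And>g. g \<in> G \<Longrightarrow> H g \<in> gcarr A \<and> gadd A (F g) (H g) = gzero A"
    by metis
  define H' where "H' = (\<lambda>g. if g \<in> G then H g else gzero A)"
  have H': "H' \<in> gcarr B" using H by (auto simp: H'_def skew_carrier_iff)
  moreover have "gadd B F H' = gzero B"
    by (rule skew_eqI) (use F H H' in \<open>auto simp: H'_def\<close>)
  ultimately show "\<exists>H\<in>gcarr B. gadd B F H = gzero B" by blast
  fix K assume K: "K \<in> gcarr B"
  show "gadd B F K = gadd B K F" using F K by (auto intro!: skew_eqI simp: gadd_comm)
  fix L assume L: "L \<in> gcarr B"
  show "gadd B (gadd B F K) L = gadd B F (gadd B K L)"
    using F K L by (auto intro!: skew_eqI simp: gadd_assoc)
qed simp_all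

lemma ssum_skew_apply:
  assumes "\<And>x. x \<in> S \<Longrightarrow> Fs x \<in> gcarr B" "s \<in> G"
  shows "ssum B Fs S s = ssum A (\<lambda>x. Fs x s) S"
  by (rule ssum_hom[OF additive_group_skew additive_group, where h="\<lambda>X. X s"]) (use assms in auto)

lemma factorizations_eq:
  assumes s: "s \<in> G"
  shows "{(g, h). g \<in> G \<and> h \<in> G \<and> g \<circ> h = s} = (\<lambda>g. (g, inv g \<circ> s)) ` G"
proof -
  have "h = inv g \<circ> s" if "g \<in> G" "g \<circ> h = s" for g h
    using that by (metis comp_assoc G_inv_comp id_comp)
  moreover have "g \<circ> (inv g \<circ> s) = s" if "g \<in> G" for g
    using that by (simp flip: comp_assoc)
  ultimately show ?thesis using s by auto
qed

lemma skew_mul_apply: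
  assumes F: "F \<in> gcarr B" and H: "H \<in> gcarr B" and s: "s \<in> G"
  shows "gmul B F H s = ssum A (\<lambda>g. gmul A (F g) (g (H (inv g \<circ> s)))) G"
proof -
  have "gmul B F H s = ssum A (\<lambda>(g, h). gmul A (F g) (g (H h))) ((\<lambda>g. (g, inv g \<circ> s)) ` G)"
    using s by (simp only: skew_mul_eq factorizations_eq if_True)
  also have "\<dots> = ssum A (\<lambda>g. gmul A (F g) (g (H (inv g \<circ> s)))) G"
    by (subst ssum_reindex[OF additive_group]) (use F H s in \<open>auto simp: inj_on_def\<close>)
  finally show ?thesis .
qed

lemma skew_mul_closed [simp]:
  assumes F: "F \<in> gcarr B" and H: "H \<in> gcarr B"
  shows "gmul B F H \<in> gcarr B"
proof (rule skew_carrierI)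
  fix s assume s: "s \<in> G"
  show "gmul B F H s \<in> gcarr A"
    unfolding skew_mul_apply[OF F H s] by (rule ssum_closed[OF additive_group]) (use F H s in auto)
qed simp

lemma skew_mul_mul_left_apply:
  assumes F: "F \<in> gcarr B" and H: "H \<in> gcarr B" and K: "K \<in> gcarr B" and s: "s \<in> G"
  shows "gmul B (gmul B F H) K s =
    ssum A (\<lambda>u. ssum A (\<lambda>g. gmul A (gmul A (F g) (g (H (inv g \<circ> u)))) (u (K (inv u \<circ> s)))) G) G"
proof -
  have "gmul B (gmul B F H) K s = ssum A (\<lambda>u. gmul A (gmul B F H u) (u (K (inv u \<circ> s)))) G"
    by (rule skew_mul_apply[OF skew_mul_closed[OF F H] K s])
  also have "\<dots> = ssum A (\<lambda>u. ssum A (\<lambda>g. gmul A (gmul A (F g) (g (H (inv g \<circ> u)))) (u (K (inv u \<circ> s)))) G) G"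
    by (rule ssum_cong) (use F H K s in \<open>auto simp: skew_mul_apply intro!: gmul_ssum_left\<close>)
  finally show ?thesis .
qed

text \<open>On the right the inner sum runs over the second factor \<open>h\<close>; substituting \<open>u = g \<circ> h\<close>
  brings it into the same shape as the left-nested product.\<close>

lemma skew_mul_mul_right_apply:
  assumes F: "F \<in> gcarr B" and H: "H \<in> gcarr B" and K: "K \<in> gcarr B" and s: "s \<in> G"
  shows "gmul B F (gmul B H K) s =
    ssum A (\<lambda>g. ssum A (\<lambda>u. gmul A (gmul A (F g) (g (H (inv g \<circ> u)))) (u (K (inv u \<circ> s)))) G) G"
proof -
  have "gmul B F (gmul B H K) s = ssum A (\<lambda>g. gmul A (F g) (g (gmul B H K (inv g \<circ> s)))) G"
    by (rule skew_mul_apply[OF F skew_mul_closed[OF H K] s])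
  also have "\<dots> = ssum A (\<lambda>g. ssum A (\<lambda>u. gmul A (gmul A (F g) (g (H (inv g \<circ> u)))) (u (K (inv u \<circ> s)))) G) G"
  proof (rule ssum_cong)
    fix g assume g: "g \<in> G"
    define P where "P = (\<lambda>h. gmul A (F g) (gmul A (g (H h)) (g (h (K (inv h \<circ> (inv g \<circ> s)))))))"
    have "gmul A (F g) (g (gmul B H K (inv g \<circ> s)))
        = gmul A (F g) (g (ssum A (\<lambda>h. gmul A (H h) (h (K (inv h \<circ> (inv g \<circ> s))))) G))"
      using g s by (simp add: skew_mul_apply[OF H K])
    also have "\<dots> = ssum A P G"
      using F H K g s
      by (simp add: aut_ssum gmul_ssum_right aut_gmul P_def cong: ssum_cong)
    also have "\<dots> = ssum A (\<lambda>u. P (inv g \<circ> u)) G"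
      by (rule ssum_translate) (use F H K g s in \<open>auto simp: P_def\<close>)
    also have "\<dots> = ssum A (\<lambda>u. gmul A (gmul A (F g) (g (H (inv g \<circ> u)))) (u (K (inv u \<circ> s)))) G"
    proof (rule ssum_cong)
      fix u assume u: "u \<in> G"
      have "inv (inv g \<circ> u) \<circ> (inv g \<circ> s) = inv u \<circ> s"
        using g u by (simp add: G_inv_of_comp G_comp_inv_cancel)
      moreover have "g ((inv g \<circ> u) y) = u y" for y using g by simp
      ultimately show "P (inv g \<circ> u) = gmul A (gmul A (F g) (g (H (inv g \<circ> u)))) (u (K (inv u \<circ> s)))"
        unfolding P_def using F H K g u s by (simp add: gmul_assoc)
    qed
    finally show "gmul A (F g) (g (gmul B H K (inv g \<circ> s))) =
      ssum A (\<lambda>u. gmul A (gmul A (F g) (g (H (inv g \<circ> u)))) (u (K (inv u \<circ> s)))) G" .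
  qed
  finally show ?thesis .
qed

lemma skew_mul_assoc:
  assumes F: "F \<in> gcarr B" and H: "H \<in> gcarr B" and K: "K \<in> gcarr B"
  shows "gmul B (gmul B F H) K = gmul B F (gmul B H K)"
proof (rule skew_eqI)
  fix s assume s: "s \<in> G"
  show "gmul B (gmul B F H) K s = gmul B F (gmul B H K) s"
    unfolding skew_mul_mul_left_apply[OF F H K s] skew_mul_mul_right_apply[OF F H K s]
    by (rule ssum_swap[OF additive_group finite_G finite_G]) (use F H K s in auto)
qed (use F H K in simp_all)

lemma skew_mul_one_left:
  assumes F: "F \<in> gcarr B" shows "gmul B (gone B) F = F"
proof (rule skew_eqI)
  fix s assume s: "s \<in> G"
  have "gmul B (gone B) F s = gmul A (gone B id) (id (F (inv id \<circ> s)))"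
    unfolding skew_mul_apply[OF skew_one_closed F s]
    by (rule ssum_single[OF additive_group finite_G]) (use F s in auto)
  then show "gmul B (gone B) F s = F s" using F s by simp
qed (use F in simp_all)

lemma skew_mul_one_right:
  assumes F: "F \<in> gcarr B" shows "gmul B F (gone B) = F"
proof (rule skew_eqI)
  fix s assume s: "s \<in> G"
  have "inv g \<circ> s \<noteq> id" if "g \<in> G" "g \<noteq> s" for g
    using that by (metis comp_assoc G_comp_inv id_comp comp_id)
  then have "gmul B F (gone B) s = gmul A (F s) (s (gone B (inv s \<circ> s)))"
    unfolding skew_mul_apply[OF F skew_one_closed s]
    by (intro ssum_single[OF additive_group finite_G s]) (use F s in auto)
  then show "gmul B F (gone B) s = F s" using F s aut_gone[OF s] by simp
qed (use F in simp_all)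

lemma skew_mul_add_left:
  assumes F: "F \<in> gcarr B" and H: "H \<in> gcarr B" and K: "K \<in> gcarr B"
  shows "gmul B F (gadd B H K) = gadd B (gmul B F H) (gmul B F K)"
proof (rule skew_eqI)
  fix s assume s: "s \<in> G"
  have "gmul B F (gadd B H K) s = ssum A (\<lambda>g. gadd A (gmul A (F g) (g (H (inv g \<circ> s))))
      (gmul A (F g) (g (K (inv g \<circ> s))))) G"
    unfolding skew_mul_apply[OF F skew_add_closed[OF H K] s]
    by (rule ssum_cong) (use F H K s in \<open>auto simp: aut_gadd gmul_gadd_left\<close>)
  then show "gmul B F (gadd B H K) s = gadd B (gmul B F H) (gmul B F K) s"
    using F H K s by (simp add: ssum_gadd[OF additive_group] skew_mul_apply)
qed (use F H K in simp_all)

lemma skew_mul_add_right: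
  assumes F: "F \<in> gcarr B" and H: "H \<in> gcarr B" and K: "K \<in> gcarr B"
  shows "gmul B (gadd B F H) K = gadd B (gmul B F K) (gmul B H K)"
proof (rule skew_eqI)
  fix s assume s: "s \<in> G"
  have "gmul B (gadd B F H) K s = ssum A (\<lambda>g. gadd A (gmul A (F g) (g (K (inv g \<circ> s))))
      (gmul A (H g) (g (K (inv g \<circ> s))))) G"
    unfolding skew_mul_apply[OF skew_add_closed[OF F H] K s]
    by (rule ssum_cong) (use F H K s in \<open>auto simp: gmul_gadd_right\<close>)
  then show "gmul B (gadd B F H) K s = gadd B (gmul B F K) (gmul B H K) s"
    using F H K s by (simp add: ssum_gadd[OF additive_group] skew_mul_apply)
qed (use F H K in simp_all)

lemma skew_smul_mul_left:
  assumes F: "F \<in> gcarr B" and H: "H \<in> gcarr B"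
  shows "gsmul B c (gmul B F H) = gmul B (gsmul B c F) H"
proof (rule skew_eqI)
  fix s assume s: "s \<in> G"
  have "gsmul B c (gmul B F H) s = ssum A (\<lambda>g. gsmul A c (gmul A (F g) (g (H (inv g \<circ> s))))) G"
    using F H s by (simp add: skew_mul_apply gsmul_ssum)
  also have "\<dots> = gmul B (gsmul B c F) H s"
    unfolding skew_mul_apply[OF skew_smul_closed[OF F] H s]
    by (rule ssum_cong) (use F H s in \<open>auto simp: gsmul_gmul_left\<close>)
  finally show "gsmul B c (gmul B F H) s = gmul B (gsmul B c F) H s" .
qed (use F H in simp_all)

lemma skew_smul_mul_right:
  assumes F: "F \<in> gcarr B" and H: "H \<in> gcarr B"
  shows "gsmul B c (gmul B F H) = gmul B F (gsmul B c H)"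
proof (rule skew_eqI)
  fix s assume s: "s \<in> G"
  have "gsmul B c (gmul B F H) s = ssum A (\<lambda>g. gsmul A c (gmul A (F g) (g (H (inv g \<circ> s))))) G"
    using F H s by (simp add: skew_mul_apply gsmul_ssum)
  also have "\<dots> = gmul B F (gsmul B c H) s"
    unfolding skew_mul_apply[OF F skew_smul_closed[OF H] s]
    by (rule ssum_cong) (use F H s in \<open>auto simp: gsmul_gmul_right aut_gsmul\<close>)
  finally show "gsmul B c (gmul B F H) s = gmul B F (gsmul B c H) s" .
qed (use F H in simp_all)

section \<open>Grading and local finiteness of the skew group algebra\<close>

lemma lsum_skew_apply: "lsum B Xs g = (if g \<in> G then lsum A (map (\<lambda>X. X g) Xs) else gzero A)"
  by (induction Xs) auto

lemma skew_piece_carrier: "F \<in> gpiece B n \<Longrightarrow> F \<in> gcarr B"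
  using gpiece_subset by (auto simp: skew_piece_iff skew_carrier_iff)

lemma skew_piece_decomp:
  assumes X: "X \<in> gcarr B"
  shows "\<exists>N cs. (\<forall>n<N. cs n \<in> gpiece B n) \<and> X = lsum B (map cs [0..<N])"
proof -
  have "\<forall>g\<in>G. \<exists>N cs. (\<forall>n<N. cs n \<in> gpiece A n) \<and> X g = lsum A (map cs [0..<N])"
    using X gpiece_decomp skew_carrier_apply by blast
  then obtain Ng csg where decomp: "\<And>g. g \<in> G \<Longrightarrow>
      (\<forall>n<Ng g. csg g n \<in> gpiece A n) \<and> X g = lsum A (map (csg g) [0..<Ng g])"
    by metis
  define N where "N = (\<Sum>g\<in>G. Ng g)"
  define cs where "cs = (\<lambda>n g. if g \<in> G \<and> n < Ng g then csg g n else gzero A)"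
  have bound: "Ng g \<le> N" if "g \<in> G" for g unfolding N_def using finite_G that by (simp add: member_le_sum)
  have "X = lsum B (map cs [0..<N])"
  proof
    fix g show "X g = lsum B (map cs [0..<N]) g"
    proof (cases "g \<in> G")
      case True
      have "lsum A (map (\<lambda>n. cs n g) [0..<N]) = lsum A (map (csg g) [0..<Ng g])"
        by (rule lsum_pad_zeros[OF additive_group]) (use bound[OF True] True in \<open>auto simp: cs_def\<close>)
      then show ?thesis using decomp[OF True] True by (simp add: lsum_skew_apply comp_def)
    qed (use X in \<open>simp add: lsum_skew_apply skew_carrier_outside\<close>)
  qed
  moreover have "\<forall>n<N. cs n \<in> gpiece B n"
    using decomp by (auto simp: skew_piece_iff cs_def)
  ultimately show ?thesis by blast
qed

lemma skew_piece_decomp_unique: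
  assumes cs: "\<forall>n<N. cs n \<in> gpiece B n" and zero: "lsum B (map cs [0..<N]) = gzero B" and n: "n < N"
  shows "cs n = gzero B"
proof
  fix g show "cs n g = gzero B g"
  proof (cases "g \<in> G")
    case True
    then have "lsum A (map (\<lambda>m. cs m g) [0..<N]) = gzero A"
      using fun_cong[OF zero, of g] by (simp add: lsum_skew_apply comp_def)
    then show ?thesis using gpiece_decomp_unique[of N "\<lambda>m. cs m g" n] cs n True
      by (auto simp: skew_piece_iff)
  qed (use cs n in \<open>auto simp: skew_piece_iff\<close>)
qed

lemma skew_piece_mul:
  assumes F: "F \<in> gpiece B i" and H: "H \<in> gpiece B j"
  shows "gmul B F H \<in> gpiece B (i + j)"
  unfolding skew_piece_iff
proof (intro conjI ballI allI impI)
  fix s assume s: "s \<in> G"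
  have FH: "F \<in> gcarr B" "H \<in> gcarr B" using F H skew_piece_carrier by auto
  show "gmul B F H s \<in> gpiece A (i + j)"
    unfolding skew_mul_apply[OF FH s]
  proof (rule ssum_closed_subset[OF additive_group gpiece_subset gpiece_zero gpiece_gadd])
    fix g assume g: "g \<in> G"
    have "F g \<in> gpiece A i" "g (H (inv g \<circ> s)) \<in> gpiece A j"
      using F H g s aut_gpiece by (simp_all add: skew_piece_iff)
    then show "gmul A (F g) (g (H (inv g \<circ> s))) \<in> gpiece A (i + j)" by (rule gpiece_gmul)
  qed
qed simp

lemma graded_algebra_skew: "graded_algebra B"
  unfolding graded_algebra_def
proof (intro conjI)
  show "\<forall>x\<in>gcarr B. \<forall>y\<in>gcarr B. \<forall>z\<in>gcarr B. gadd B (gadd B x y) z = gadd B x (gadd B y z)"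
    "\<forall>x\<in>gcarr B. \<forall>y\<in>gcarr B. gadd B x y = gadd B y x"
    "\<forall>x\<in>gcarr B. gadd B (gzero B) x = x"
    "\<forall>x\<in>gcarr B. \<exists>y\<in>gcarr B. gadd B x y = gzero B"
    using additive_group_skew unfolding additive_group_def by blast+
  show "\<forall>c. \<forall>x\<in>gcarr B. \<forall>y\<in>gcarr B. gsmul B c (gadd B x y) = gadd B (gsmul B c x) (gsmul B c y)"
    "\<forall>c d. \<forall>x\<in>gcarr B. gsmul B (c + d) x = gadd B (gsmul B c x) (gsmul B d x)"
    "\<forall>c d. \<forall>x\<in>gcarr B. gsmul B c (gsmul B d x) = gsmul B (c * d) x"
    "\<forall>x\<in>gcarr B. gsmul B 1 x = x"
    by (intro allI ballI skew_eqI; simp add: gsmul_gadd gsmul_add gsmul_gsmul)+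
  show "\<forall>x\<in>gcarr B. \<forall>y\<in>gcarr B. \<forall>z\<in>gcarr B. gmul B (gmul B x y) z = gmul B x (gmul B y z)"
    using skew_mul_assoc by blast
  show "\<forall>x\<in>gcarr B. gmul B (gone B) x = x \<and> gmul B x (gone B) = x"
    using skew_mul_one_left skew_mul_one_right by blast
  show "\<forall>x\<in>gcarr B. \<forall>y\<in>gcarr B. \<forall>z\<in>gcarr B.
      gmul B x (gadd B y z) = gadd B (gmul B x y) (gmul B x z) \<and>
      gmul B (gadd B x y) z = gadd B (gmul B x z) (gmul B y z)"
    using skew_mul_add_left skew_mul_add_right by blast
  show "\<forall>c. \<forall>x\<in>gcarr B. \<forall>y\<in>gcarr B. gsmul B c (gmul B x y) = gmul B (gsmul B c x) y \<and>
      gsmul B c (gmul B x y) = gmul B x (gsmul B c y)"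
    using skew_smul_mul_left skew_smul_mul_right by blast
  show "\<forall>n. gpiece B n \<subseteq> gcarr B \<and> gzero B \<in> gpiece B n \<and>
         (\<forall>x\<in>gpiece B n. \<forall>y\<in>gpiece B n. gadd B x y \<in> gpiece B n) \<and>
         (\<forall>c. \<forall>x\<in>gpiece B n. gsmul B c x \<in> gpiece B n)"
    using skew_piece_carrier by (auto simp: skew_piece_iff gpiece_gadd gpiece_gsmul)
  show "gone B \<in> gpiece B 0"
    using gone_gpiece by (auto simp: skew_piece_iff)
  show "\<forall>x\<in>gcarr B. \<exists>N c. (\<forall>n<N. c n \<in> gpiece B n) \<and> x = lsum B (map c [0..<N])"
    using skew_piece_decomp by blast
  show "\<forall>N c. (\<forall>n<N. c n \<in> gpiece B n) \<and> lsum B (map c [0..<N]) = gzero B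
      \<longrightarrow> (\<forall>n<N. c n = gzero B)"
    using skew_piece_decomp_unique by blast
  show "\<forall>i j. \<forall>x\<in>gpiece B i. \<forall>y\<in>gpiece B j. gmul B x y \<in> gpiece B (i + j)"
    using skew_piece_mul by blast
qed simp_all

definition skew_single :: "('a \<Rightarrow> 'a) \<Rightarrow> 'a \<Rightarrow> ('a \<Rightarrow> 'a) \<Rightarrow> 'a" where
  "skew_single h a = (\<lambda>g. if g = h then a else gzero A)"

lemma skew_single_closed: "h \<in> G \<Longrightarrow> a \<in> gcarr A \<Longrightarrow> skew_single h a \<in> gcarr B"
  by (auto simp: skew_single_def skew_carrier_iff)

lemma skew_single_piece: "h \<in> G \<Longrightarrow> a \<in> gpiece A n \<Longrightarrow> skew_single h a \<in> gpiece B n"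
  by (auto simp: skew_single_def skew_piece_iff)

lemma skew_single_gadd:
  "h \<in> G \<Longrightarrow> a \<in> gcarr A \<Longrightarrow> b \<in> gcarr A \<Longrightarrow>
    skew_single h (gadd A a b) = gadd B (skew_single h a) (skew_single h b)"
  by (auto simp: skew_single_def skew_group_alg_def)

lemma skew_single_gsmul: "h \<in> G \<Longrightarrow> skew_single h (gsmul A c a) = gsmul B c (skew_single h a)"
  by (auto simp: skew_single_def skew_group_alg_def)

lemma skew_single_expansion:
  assumes X: "X \<in> gcarr B" shows "X = ssum B (\<lambda>h. skew_single h (X h)) G"
proof (rule skew_eqI[OF X])
  show "ssum B (\<lambda>h. skew_single h (X h)) G \<in> gcarr B"
    by (rule ssum_closed[OF additive_group_skew]) (use X in \<open>auto intro!: skew_single_closed\<close>)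
  fix s assume s: "s \<in> G"
  have "ssum B (\<lambda>h. skew_single h (X h)) G s = ssum A (\<lambda>h. skew_single h (X h) s) G"
    by (rule ssum_skew_apply) (use X s in \<open>auto intro!: skew_single_closed\<close>)
  also have "\<dots> = skew_single s (X s) s"
    by (rule ssum_single[OF additive_group finite_G s]) (use X s in \<open>auto simp: skew_single_def\<close>)
  finally show "X s = ssum B (\<lambda>h. skew_single h (X h)) G s" by (simp add: skew_single_def)
qed

lemma lsum_skew_single_apply:
  assumes g: "g \<in> G" and "length cs = length vs"
  shows "lsum A (map (\<lambda>X. X g) (map2 (gsmul B) cs (map (skew_single h) vs)))
       = (if g = h then lsum A (map2 (gsmul A) cs vs) else gzero A)"
proof -
  have "map (\<lambda>X. X g) (map2 (gsmul B) cs (map (skew_single h) vs))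
      = map2 (\<lambda>c v. if g = h then gsmul A c v else gzero A) cs vs"
    using g by (auto simp: zip_map2 skew_single_def split: prod.splits)
  then show ?thesis
    by (cases "g = h") (auto intro!: lsum_zeros[OF additive_group] simp: set_zip)
qed

text \<open>The spanning family of \<open>B\<^sub>n\<close>: the singles \<open>v * h\<close> for \<open>v\<close> in a spanning list of \<open>A\<^sub>n\<close>
  and \<open>h\<close> running through a list \<open>hs\<close> enumerating \<open>G\<close>.\<close>

lemma lsum_skew_singles_apply:
  assumes g: "g \<in> G" and vs: "set vs \<subseteq> gcarr A" and hs: "distinct hs" "set hs \<subseteq> G"
    and len: "\<And>h. h \<in> set hs \<Longrightarrow> length (cs h) = length vs"
  shows "lsum A (map (\<lambda>X. X g)
      (map2 (gsmul B) (concat (map cs hs)) (concat (map (\<lambda>h. map (skew_single h) vs) hs))))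
    = (if g \<in> set hs then lsum A (map2 (gsmul A) (cs g) vs) else gzero A)"
  using hs len
proof (induction hs)
  case (Cons h hs)
  have h: "h \<in> G" using Cons.prems by simp
  have closed: "set (map2 (gsmul A) cl vs) \<subseteq> gcarr A" for cl
    using vs by (auto dest: set_zip_rightD)
  have evals_closed: "set (map (\<lambda>X. X g) (map2 (gsmul B) cl Xs)) \<subseteq> gcarr A"
    if "set Xs \<subseteq> gcarr B" for cl Xs
    using that g by (auto dest!: set_zip_rightD)
  have singles: "set (concat (map (\<lambda>h. map (skew_single h) vs) hs')) \<subseteq> gcarr B"
    if "set hs' \<subseteq> G" for hs'
    using that vs by (auto intro!: skew_single_closed)
  have "map2 (gsmul B) (concat (map cs (h # hs))) (concat (map (\<lambda>h. map (skew_single h) vs) (h # hs)))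
    = map2 (gsmul B) (cs h) (map (skew_single h) vs) @
      map2 (gsmul B) (concat (map cs hs)) (concat (map (\<lambda>h. map (skew_single h) vs) hs))"
    using Cons.prems by (simp add: zip_append)
  then have "lsum A (map (\<lambda>X. X g) (map2 (gsmul B) (concat (map cs (h # hs)))
      (concat (map (\<lambda>h. map (skew_single h) vs) (h # hs)))))
    = gadd A (lsum A (map (\<lambda>X. X g) (map2 (gsmul B) (cs h) (map (skew_single h) vs))))
        (lsum A (map (\<lambda>X. X g) (map2 (gsmul B) (concat (map cs hs))
          (concat (map (\<lambda>h. map (skew_single h) vs) hs)))))"
    using lsum_append[OF additive_group evals_closed evals_closed] singles[of "[h]"] singles[of hs]
      Cons.prems by simp
  also have "\<dots> = (if g \<in> set (h # hs) then lsum A (map2 (gsmul A) (cs g) vs) else gzero A)"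
    using lsum_skew_single_apply[OF g, of "cs h" vs h] Cons lsum_closed[OF additive_group closed]
    by auto
  finally show ?case .
qed simp

lemma locally_finite_skew:
  assumes "locally_finite A"
  shows "locally_finite B"
  unfolding locally_finite_def fin_dim_def
proof
  fix n
  obtain vs where vs: "set vs \<subseteq> gpiece A n"
    and span: "\<And>x. x \<in> gpiece A n \<Longrightarrow> \<exists>cs. length cs = length vs \<and> x = lsum A (map2 (gsmul A) cs vs)"
    using assms unfolding locally_finite_def fin_dim_def by blast
  have vs_closed: "set vs \<subseteq> gcarr A" using vs gpiece_subset by blast
  obtain hs where hs: "set hs = G" "distinct hs" using finite_distinct_list[OF finite_G] by blast
  define Ys where "Ys = concat (map (\<lambda>h. map (skew_single h) vs) hs)"
  have "set Ys \<subseteq> gpiece B n" using vs hs skew_single_piece by (auto simp: Ys_def)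
  moreover have "\<exists>cs. length cs = length Ys \<and> X = lsum B (map2 (gsmul B) cs Ys)"
    if X: "X \<in> gpiece B n" for X
  proof -
    have "\<forall>h\<in>G. \<exists>cs. length cs = length vs \<and> X h = lsum A (map2 (gsmul A) cs vs)"
      using X span by (auto simp: skew_piece_iff)
    then obtain cs where cs: "\<And>h. h \<in> G \<Longrightarrow>
        length (cs h) = length vs \<and> X h = lsum A (map2 (gsmul A) (cs h) vs)"
      by metis
    have "length (concat (map cs hs)) = length Ys"
      unfolding Ys_def length_concat map_map
      by (rule arg_cong[where f=sum_list], rule map_cong) (use cs hs in auto)
    moreover have "X = lsum B (map2 (gsmul B) (concat (map cs hs)) Ys)"
    proof
      fix g show "X g = lsum B (map2 (gsmul B) (concat (map cs hs)) Ys) g"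
        using lsum_skew_singles_apply[OF _ vs_closed hs(2), of g cs] hs cs X
        by (cases "g \<in> G") (auto simp: lsum_skew_apply Ys_def skew_piece_iff)
    qed
    ultimately show ?thesis by blast
  qed
  ultimately show "\<exists>vs. set vs \<subseteq> gpiece B n \<and>
      (\<forall>x\<in>gpiece B n. \<exists>cs. length cs = length vs \<and> x = lsum B (map2 (gsmul B) cs vs))"
    by blast
qed

end

section \<open>Graded Frobenius algebras\<close>

lemma gdualI:
  assumes "additive_group B" and top: "\<And>n x. l < int n \<Longrightarrow> x \<in> gpiece B n \<Longrightarrow> x = gzero B"
    and add: "\<And>x y. x \<in> gcarr B \<Longrightarrow> y \<in> gcarr B \<Longrightarrow> f (gadd B x y) = f x + f y"
    and "\<And>c x. x \<in> gcarr B \<Longrightarrow> f (gsmul B c x) = c * f x"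
    and "\<And>x. x \<notin> gcarr B \<Longrightarrow> f x = 0"
  shows "f \<in> gdual B"
  unfolding gdual_def
proof (intro CollectI conjI allI ballI impI)
  show "\<exists>N. \<forall>n\<ge>N. \<forall>x\<in>gpiece B n. f x = 0"
  proof (intro exI allI impI ballI)
    fix n x assume "nat (l + 1) \<le> n" and x: "x \<in> gpiece B n"
    then have "l < int n" by linarith
    then have "x = gzero B" using top x by blast
    then show "f x = 0" using additive_map_zero[OF assms(1) add] by simp
  qed
qed (use assms in auto)

lemma graded_frobeniusI:
  assumes graded: "graded_algebra B" and "locally_finite B"
    and bij: "bij_betw \<psi> (gcarr B) (gdual B)"
    and add: "\<And>F H. F \<in> gcarr B \<Longrightarrow> H \<in> gcarr B \<Longrightarrow> \<psi> (gadd B F H) = (\<lambda>X. \<psi> F X + \<psi> H X)"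
    and smul: "\<And>c F. F \<in> gcarr B \<Longrightarrow> \<psi> (gsmul B c F) = (\<lambda>X. c * \<psi> F X)"
    and module: "\<And>F b. F \<in> gcarr B \<Longrightarrow> b \<in> gcarr B \<Longrightarrow> dual_ract B (\<psi> F) b = \<psi> (gmul B F b)"
    and degree: "\<And>i. \<psi> ` shift_piece B l i = gdual_piece B i"
  shows "graded_frobenius B l"
  unfolding graded_frobenius_def
proof (intro conjI exI)
  define \<phi> where "\<phi> = inv_into (gcarr B) \<psi>"
  have closed: "\<phi> f \<in> gcarr B" and psi_phi: "\<psi> (\<phi> f) = f" if "f \<in> gdual B" for f
    using that bij bij_betwE[OF bij_betw_inv_into[OF bij]] unfolding \<phi>_def
    by (auto simp: bij_betw_inv_into_right)
  have phi_psi: "\<phi> (\<psi> F) = F" if "F \<in> gcarr B" for F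
    using that bij unfolding \<phi>_def by (simp add: bij_betw_inv_into_left)
  have add_mul_closed: "\<forall>x\<in>gcarr B. \<forall>y\<in>gcarr B. gadd B x y \<in> gcarr B \<and> gmul B x y \<in> gcarr B"
    using graded unfolding graded_algebra_def by (elim conjE) assumption
  have smul_closed: "\<forall>c. \<forall>x\<in>gcarr B. gsmul B c x \<in> gcarr B"
    using graded unfolding graded_algebra_def by (elim conjE) assumption
  show "bij_betw \<phi> (gdual B) (gcarr B)" unfolding \<phi>_def by (rule bij_betw_inv_into[OF bij])
  show "\<forall>f\<in>gdual B. \<forall>g\<in>gdual B. \<phi> (\<lambda>x. f x + g x) = gadd B (\<phi> f) (\<phi> g)"
    using add[OF closed closed] add_mul_closed smul_closed phi_psi closed by (metis psi_phi)
  show "\<forall>c. \<forall>f\<in>gdual B. \<phi> (\<lambda>x. c * f x) = gsmul B c (\<phi> f)"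
    using smul[OF closed] add_mul_closed smul_closed phi_psi closed by (metis psi_phi)
  show "\<forall>f\<in>gdual B. \<forall>b\<in>gcarr B. \<phi> (dual_ract B f b) = gmul B (\<phi> f) b"
    using module[OF closed] add_mul_closed smul_closed phi_psi closed by (metis psi_phi)
  have "shift_piece B l i \<subseteq> gcarr B" for i
    using graded unfolding graded_algebra_def shift_piece_def by auto
  then show "\<forall>i. \<phi> ` gdual_piece B i = shift_piece B l i"
    using degree bij unfolding \<phi>_def by (simp add: bij_betw_def flip: degree)
qed (use assms(1,2) in auto)

locale frobenius_setting = skew_setting A G for A :: "('k::field, 'a) gr_alg" and G +
  fixes l :: int and \<phi> :: "('a \<Rightarrow> 'k) \<Rightarrow> 'a"
  assumes locally_finite: "locally_finite A"
    and phi_bij: "bij_betw \<phi> (gdual A) (gcarr A)"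
    and phi_add: "\<And>f g. f \<in> gdual A \<Longrightarrow> g \<in> gdual A \<Longrightarrow> \<phi> (\<lambda>x. f x + g x) = gadd A (\<phi> f) (\<phi> g)"
    and phi_module: "\<And>f b. f \<in> gdual A \<Longrightarrow> b \<in> gcarr A \<Longrightarrow> \<phi> (dual_ract A f b) = gmul A (\<phi> f) b"
    and phi_degree: "\<And>i. \<phi> ` gdual_piece A i = shift_piece A l i"
begin

lemma phi_closed: "f \<in> gdual A \<Longrightarrow> \<phi> f \<in> gcarr A"
  using phi_bij bij_betwE by blast

lemma phi_inj: "f \<in> gdual A \<Longrightarrow> g \<in> gdual A \<Longrightarrow> \<phi> f = \<phi> g \<Longrightarrow> f = g"
  using phi_bij by (metis bij_betw_imp_inj_on inj_onD)

lemma gdual_zero: "(\<lambda>x. 0) \<in> gdual A"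
  by (auto simp: gdual_def)

lemma phi_zero: "\<phi> (\<lambda>x. 0) = gzero A"
  using phi_add[OF gdual_zero gdual_zero]
  by (intro additive_group_idem_zero[OF additive_group phi_closed[OF gdual_zero]]) simp

text \<open>\<open>D(A)\<^sub>i = 0\<close> for \<open>i > 0\<close>, and \<open>\<phi>\<close> maps it onto \<open>A\<^sub>n\<close> with \<open>n = l + i\<close>.\<close>

lemma gpiece_above_zero:
  assumes n: "l < int n" and x: "x \<in> gpiece A n"
  shows "x = gzero A"
proof -
  define i where "i = int n - l"
  have dual_trivial: "gdual_piece A i \<subseteq> {\<lambda>x. 0}"
  proof
    fix f assume f: "f \<in> gdual_piece A i"
    then have fd: "f \<in> gdual A" and vanish: "\<And>m y. y \<in> gpiece A m \<Longrightarrow> f y = 0"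
      using n by (auto simp: gdual_piece_def i_def)
    have add: "\<And>x y. x \<in> gcarr A \<Longrightarrow> y \<in> gcarr A \<Longrightarrow> f (gadd A x y) = f x + f y"
      using fd by (auto simp: gdual_def)
    have "f y = 0" for y
    proof (cases "y \<in> gcarr A")
      case True
      then obtain N cs where cs: "\<forall>n<N. cs n \<in> gpiece A n" "y = lsum A (map cs [0..<N])"
        using gpiece_decomp by blast
      have "f y = sum_list (map f (map cs [0..<N]))"
        unfolding cs(2)
        by (rule additive_map_lsum[OF additive_group add additive_map_zero[OF additive_group add]])
          (use cs(1) gpiece_carrier in auto)
      also have "map f (map cs [0..<N]) = map (\<lambda>_. 0) [0..<N]"
        unfolding map_map by (rule map_cong) (use cs(1) vanish in auto)
      also have "sum_list \<dots> = 0" by (rule sum_list_0)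
      finally show ?thesis .
    qed (use fd in \<open>auto simp: gdual_def\<close>)
    then show "f \<in> {\<lambda>x. 0}" by auto
  qed
  have "shift_piece A l i = \<phi> ` gdual_piece A i" by (rule phi_degree[symmetric])
  also have "\<dots> \<subseteq> \<phi> ` {\<lambda>x. 0}" using dual_trivial by (rule image_mono)
  finally have "shift_piece A l i \<subseteq> {gzero A}" using phi_zero by simp
  then show ?thesis using x n by (auto simp: shift_piece_def i_def)
qed

definition frob_form :: "'a \<Rightarrow> 'k" where
  "frob_form = inv_into (gdual A) \<phi> (gone A)"

lemma frob_form_gdual: "frob_form \<in> gdual A"
  unfolding frob_form_def using phi_bij by (metis bij_betw_def inv_into_into one_closed)

lemma phi_frob_form: "\<phi> frob_form = gone A"
  unfolding frob_form_def using phi_bij by (metis bij_betw_def f_inv_into_f one_closed)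

lemma frob_form_gadd [simp]: "x \<in> gcarr A \<Longrightarrow> y \<in> gcarr A \<Longrightarrow> frob_form (gadd A x y) = frob_form x + frob_form y"
  and frob_form_gsmul: "x \<in> gcarr A \<Longrightarrow> frob_form (gsmul A c x) = c * frob_form x"
  using frob_form_gdual by (auto simp: gdual_def)

lemma frob_form_zero [simp]: "frob_form (gzero A) = 0"
  using additive_map_zero[OF additive_group frob_form_gadd] .

text \<open>Since \<open>\<phi>\<close> is a module map, \<open>\<phi>\<^sup>-\<^sup>1(b)\<close> is the functional \<open>x \<mapsto> \<lambda>(b x)\<close>, where
  \<open>\<lambda> = \<phi>\<^sup>-\<^sup>1(1)\<close>; so the form \<open>\<lambda>\<close> is nondegenerate and determines \<open>\<phi>\<close>.\<close>

definition frob_pairing :: "'a \<Rightarrow> 'a \<Rightarrow> 'k" where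
  "frob_pairing b = dual_ract A frob_form b"

lemma frob_pairing_apply: "frob_pairing b x = (if x \<in> gcarr A then frob_form (gmul A b x) else 0)"
  by (simp add: frob_pairing_def dual_ract_def)

lemma frob_pairing_gdual: "b \<in> gcarr A \<Longrightarrow> frob_pairing b \<in> gdual A"
  by (rule gdualI[OF additive_group gpiece_above_zero])
    (auto simp: frob_pairing_apply gmul_gadd_left frob_form_gadd frob_form_gsmul
      simp flip: gsmul_gmul_right)

lemma phi_frob_pairing: "b \<in> gcarr A \<Longrightarrow> \<phi> (frob_pairing b) = b"
  unfolding frob_pairing_def using phi_module[OF frob_form_gdual] phi_frob_form by simp

lemma frob_pairing_phi: "f \<in> gdual A \<Longrightarrow> frob_pairing (\<phi> f) = f"
  by (rule phi_inj) (auto simp: frob_pairing_gdual phi_closed phi_frob_pairing)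

lemma frob_form_nondegenerate:
  assumes "b \<in> gcarr A" "b' \<in> gcarr A"
    and "\<And>x. x \<in> gcarr A \<Longrightarrow> frob_form (gmul A b x) = frob_form (gmul A b' x)"
  shows "b = b'"
  using assms phi_frob_pairing by (metis frob_pairing_apply ext)

lemma frob_form_degree: "frob_form \<in> gdual_piece A (- l)"
proof -
  have "gone A \<in> shift_piece A l (- l)" using gone_gpiece by (simp add: shift_piece_def)
  then obtain f where f: "f \<in> gdual_piece A (- l)" "\<phi> f = gone A"
    using phi_degree[of "- l"] by (metis imageE)
  then have "f = frob_form"
    using phi_frob_form frob_form_gdual phi_inj by (auto simp: gdual_piece_def)
  then show ?thesis using f by simp
qed

lemma frob_form_vanishes: "int m \<noteq> l \<Longrightarrow> y \<in> gpiece A m \<Longrightarrow> frob_form y = 0"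
  using frob_form_degree by (auto simp: gdual_piece_def)

lemma frob_pairing_degree:
  "b \<in> gcarr A \<Longrightarrow> frob_pairing b \<in> gdual_piece A i \<Longrightarrow> b \<in> shift_piece A l i"
  using phi_frob_pairing phi_degree by (metis imageI)

end

section \<open>The Frobenius structure of the skew group algebra\<close>

context frobenius_setting
begin

text \<open>The Frobenius form of \<open>A * G\<close> is \<open>X \<mapsto> \<lambda>(X id)\<close>, the form of \<open>A\<close> applied to the coefficient
  of the identity; \<open>skew_dual F\<close> is its translate \<open>X \<mapsto> \<lambda>((F X) id)\<close>.\<close>

definition skew_dual :: "(('a \<Rightarrow> 'a) \<Rightarrow> 'a) \<Rightarrow> (('a \<Rightarrow> 'a) \<Rightarrow> 'a) \<Rightarrow> 'k" where
  "skew_dual F X = (if X \<in> gcarr B then frob_form (gmul B F X id) else 0)"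

lemma skew_mul_zero_left: "F \<in> gcarr B \<Longrightarrow> gmul B (gzero B) F = gzero B"
  using skew_mul_add_right[OF skew_zero_closed skew_zero_closed]
  by (intro additive_group_idem_zero[OF additive_group_skew])
    (simp_all add: additive_groupD(5)[OF additive_group_skew])

lemma skew_gpiece_above_zero: "l < int n \<Longrightarrow> X \<in> gpiece B n \<Longrightarrow> X = gzero B"
  by (rule skew_eqI) (auto simp: skew_piece_iff skew_piece_carrier gpiece_above_zero)

lemma skew_dual_gdual:
  assumes F: "F \<in> gcarr B" shows "skew_dual F \<in> gdual B"
  by (rule gdualI[OF additive_group_skew skew_gpiece_above_zero])
    (use F in \<open>auto simp: skew_dual_def skew_mul_add_left frob_form_gadd frob_form_gsmul
      simp flip: skew_smul_mul_right\<close>)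

lemma skew_mul_single_apply_id:
  assumes F: "F \<in> gcarr B" and h: "h \<in> G" and a: "a \<in> gcarr A"
  shows "gmul B F (skew_single h a) id = gmul A (F (inv h)) (inv h a)"
proof -
  have "gmul B F (skew_single h a) id = gmul A (F (inv h)) (inv h (skew_single h a (inv (inv h) \<circ> id)))"
    unfolding skew_mul_apply[OF F skew_single_closed[OF h a] id_in_G]
  proof (rule ssum_single[OF additive_group finite_G])
    fix g assume "g \<in> G" "g \<noteq> inv h"
    moreover from this have "inv g \<noteq> h" using h by (metis G_inv_inv)
    ultimately show "gmul A (F g) (g (skew_single h a (inv g \<circ> id))) = gzero A"
      using F by (simp add: skew_single_def)
  qed (use F h a in \<open>simp_all add: skew_single_def\<close>)
  then show ?thesis using h by (simp add: skew_single_def)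
qed

lemma skew_dual_single:
  assumes F: "F \<in> gcarr B" and u: "u \<in> G" and y: "y \<in> gcarr A"
  shows "skew_dual F (skew_single (inv u) (inv u y)) = frob_form (gmul A (F u) y)"
  using skew_mul_single_apply_id[OF F inv_in_G[OF u], of "inv u y"] u y
  by (simp add: skew_dual_def skew_single_closed)

lemma gdual_skew_expansion:
  assumes f: "f \<in> gdual B" and X: "X \<in> gcarr B"
  shows "f X = (\<Sum>h\<in>G. f (skew_single h (X h)))"
proof -
  have f_zero: "f (gzero B) = 0"
    by (rule additive_map_zero[OF additive_group_skew]) (use f in \<open>simp add: gdual_def\<close>)
  have "f X = f (ssum B (\<lambda>h. skew_single h (X h)) G)" using skew_single_expansion[OF X] by simp
  also have "\<dots> = (\<Sum>h\<in>G. f (skew_single h (X h)))"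
  proof (rule additive_map_ssum[OF additive_group_skew])
    show "f (gzero B) = 0" by (fact f_zero)
  qed (use X f in \<open>auto simp: gdual_def intro!: skew_single_closed\<close>)
  finally show ?thesis .
qed

lemma skew_dual_inj:
  assumes F: "F \<in> gcarr B" and H: "H \<in> gcarr B" and eq: "skew_dual F = skew_dual H"
  shows "F = H"
proof (rule skew_eqI[OF F H])
  fix u assume u: "u \<in> G"
  show "F u = H u"
    by (rule frob_form_nondegenerate) (use F H u eq skew_dual_single[OF F u] skew_dual_single[OF H u] in auto)
qed

text \<open>The \<open>u\<close>-component of a functional \<open>f\<close> on \<open>A * G\<close>: it is the candidate for
  \<open>frob_pairing (F u)\<close> when \<open>f = skew_dual F\<close>, by \<open>skew_dual_single\<close>.\<close>

definition component :: "((('a \<Rightarrow> 'a) \<Rightarrow> 'a) \<Rightarrow> 'k) \<Rightarrow> ('a \<Rightarrow> 'a) \<Rightarrow> 'a \<Rightarrow> 'k" where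
  "component f u y = (if y \<in> gcarr A then f (skew_single (inv u) (inv u y)) else 0)"

lemma component_gdual:
  assumes f: "f \<in> gdual B" and u: "u \<in> G"
  shows "component f u \<in> gdual A"
proof (rule gdualI[OF additive_group gpiece_above_zero])
  fix x y assume "x \<in> gcarr A" "y \<in> gcarr A"
  then show "component f u (gadd A x y) = component f u x + component f u y"
    using f u by (simp add: component_def aut_gadd skew_single_gadd skew_single_closed gdual_def)
next
  fix c x assume "x \<in> gcarr A"
  then show "component f u (gsmul A c x) = c * component f u x"
    using f u by (simp add: component_def aut_gsmul skew_single_gsmul skew_single_closed gdual_def)
next
  fix x assume "x \<notin> gcarr A"
  then show "component f u x = 0" by (simp add: component_def)
qed

lemma skew_dual_surj:
  assumes f: "f \<in> gdual B" shows "\<exists>F\<in>gcarr B. skew_dual F = f"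
proof -
  define F where "F = (\<lambda>u. if u \<in> G then \<phi> (component f u) else gzero A)"
  have F_closed: "F \<in> gcarr B" using component_gdual[OF f] phi_closed by (auto simp: F_def skew_carrier_iff)
  have "skew_dual F X = f X" for X
  proof (cases "X \<in> gcarr B")
    case X: True
    have "skew_dual F (skew_single h (X h)) = f (skew_single h (X h))" if h: "h \<in> G" for h
    proof -
      have "skew_dual F (skew_single h (X h))
          = frob_form (gmul A (F (inv h)) (inv h (X h)))"
        using skew_dual_single[OF F_closed inv_in_G[OF h], of "inv h (X h)"] X h by simp
      also have "\<dots> = frob_pairing (\<phi> (component f (inv h))) (inv h (X h))"
        using X h by (simp add: F_def frob_pairing_apply)
      also have "\<dots> = component f (inv h) (inv h (X h))"
        using frob_pairing_phi[OF component_gdual[OF f inv_in_G[OF h]]] by simp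
      finally show ?thesis using X h by (simp add: component_def)
    qed
    then show ?thesis
      using gdual_skew_expansion[OF skew_dual_gdual[OF F_closed] X] gdual_skew_expansion[OF f X]
      by simp
  qed (use f in \<open>simp add: skew_dual_def gdual_def\<close>)
  then show ?thesis using F_closed by blast
qed

lemma skew_dual_bij: "bij_betw skew_dual (gcarr B) (gdual B)"
  unfolding bij_betw_def inj_on_def
  using skew_dual_inj skew_dual_gdual skew_dual_surj by blast

lemma skew_dual_gadd:
  "F \<in> gcarr B \<Longrightarrow> H \<in> gcarr B \<Longrightarrow> skew_dual (gadd B F H) = (\<lambda>X. skew_dual F X + skew_dual H X)"
  by (rule ext) (simp add: skew_dual_def skew_mul_add_right frob_form_gadd)

lemma skew_dual_gsmul: "F \<in> gcarr B \<Longrightarrow> skew_dual (gsmul B c F) = (\<lambda>X. c * skew_dual F X)"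
  by (rule ext) (simp add: skew_dual_def frob_form_gsmul flip: skew_smul_mul_left)

lemma skew_dual_module:
  "F \<in> gcarr B \<Longrightarrow> b \<in> gcarr B \<Longrightarrow> dual_ract B (skew_dual F) b = skew_dual (gmul B F b)"
  by (rule ext) (simp add: dual_ract_def skew_dual_def skew_mul_assoc)

lemma skew_dual_shift_piece:
  assumes F: "F \<in> shift_piece B l i" shows "skew_dual F \<in> gdual_piece B i"
proof -
  have F_closed: "F \<in> gcarr B"
    using F skew_piece_carrier by (auto simp: shift_piece_def split: if_splits)
  have "skew_dual F X = 0" if n: "int n \<noteq> - i" and X: "X \<in> gpiece B n" for n X
  proof (cases "0 \<le> l + i")
    case True
    then have "gmul B F X \<in> gpiece B (nat (l + i) + n)"
      using F X by (simp add: shift_piece_def skew_piece_mul)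
    then have "frob_form (gmul B F X id) = 0"
      using True n by (intro frob_form_vanishes[of "nat (l + i) + n"]) (auto simp: skew_piece_iff)
    then show ?thesis by (simp add: skew_dual_def)
  next
    case False
    then show ?thesis using F X skew_piece_carrier
      by (simp add: shift_piece_def skew_dual_def skew_mul_zero_left)
  qed
  then show ?thesis using skew_dual_gdual[OF F_closed] by (simp add: gdual_piece_def)
qed

lemma gdual_piece_skew_dual:
  assumes f: "f \<in> gdual_piece B i" shows "f \<in> skew_dual ` shift_piece B l i"
proof -
  have vanish: "\<And>n X. int n \<noteq> - i \<Longrightarrow> X \<in> gpiece B n \<Longrightarrow> f X = 0"
    using f by (auto simp: gdual_piece_def)
  obtain F where F: "F \<in> gcarr B" and f_eq: "skew_dual F = f"
    using f skew_dual_surj unfolding gdual_piece_def by blast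
  have shift: "F u \<in> shift_piece A l i" if u: "u \<in> G" for u
  proof (rule frob_pairing_degree)
    show Fu: "F u \<in> gcarr A" using F u by simp
    have "frob_pairing (F u) y = 0" if m: "int m \<noteq> - i" and y: "y \<in> gpiece A m" for m y
    proof -
      have "frob_pairing (F u) y = skew_dual F (skew_single (inv u) (inv u y))"
        using skew_dual_single[OF F u] y u gpiece_carrier by (simp add: frob_pairing_apply)
      also have "\<dots> = 0"
        using vanish[OF m] skew_single_piece aut_gpiece y u f_eq by simp
      finally show ?thesis .
    qed
    then show "frob_pairing (F u) \<in> gdual_piece A i"
      using frob_pairing_gdual[OF Fu] by (simp add: gdual_piece_def)
  qed
  have "F \<in> shift_piece B l i"
  proof (cases "0 \<le> l + i")
    case True
    then show ?thesis using shift F by (auto simp: shift_piece_def skew_piece_iff skew_carrier_iff)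
  next
    case False
    then have "F = gzero B" using shift by (intro skew_eqI[OF F]) (simp_all add: shift_piece_def)
    then show ?thesis using False by (simp add: shift_piece_def)
  qed
  then show ?thesis using f_eq by blast
qed

lemma skew_dual_degree: "skew_dual ` shift_piece B l i = gdual_piece B i"
  using skew_dual_shift_piece gdual_piece_skew_dual by blast

lemma graded_frobenius_skew: "graded_frobenius B l"
  by (rule graded_frobeniusI[OF graded_algebra_skew locally_finite_skew[OF locally_finite]
        skew_dual_bij skew_dual_gadd skew_dual_gsmul skew_dual_module skew_dual_degree])

end

theorem lemma2p26:
  fixes A :: "('k::field, 'a) gr_alg" and G :: "('a \<Rightarrow> 'a) set" and l :: int
  assumes "alg_closed TYPE('k)"
    and "graded_frobenius A l"
    and "finite G"
    and "GrAut_subgroup A G"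
  shows "graded_frobenius (skew_group_alg A G) l"
proof -
  obtain \<phi> :: "('a \<Rightarrow> 'k) \<Rightarrow> 'a" where "graded_algebra A" "locally_finite A"
    "bij_betw \<phi> (gdual A) (gcarr A)"
    "\<forall>f\<in>gdual A. \<forall>g\<in>gdual A. \<phi> (\<lambda>x. f x + g x) = gadd A (\<phi> f) (\<phi> g)"
    "\<forall>f\<in>gdual A. \<forall>b\<in>gcarr A. \<phi> (dual_ract A f b) = gmul A (\<phi> f) b"
    "\<forall>i. \<phi> ` gdual_piece A i = shift_piece A l i"
    using assms(2) unfolding graded_frobenius_def by blast
  then interpret frobenius_setting A G l \<phi>
    using assms(3,4) by unfold_locales blast+
  show ?thesis by (rule graded_frobenius_skew)
qed

end
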